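(* Let $G=(V,E)$ be an atomic bispanning graph, $v\in V$ a vertex of degree $3$ with neighbours $x,y,z$ and incident edges $e_x,e_y,e_z$. Let $(S,T)$ be a pair of disjoint spanning trees of $G$ with $S\cup T=E$, and let $e_c$ be the attachment edge, $e_a$ the cycle edge and $e_b$ the non-cycle edge of $v$ and $(S,T)$. Then $(e_c,e_a,S,T)$ is an arc of $\vec\tau_3(G)$, i.e. $(e_c,e_a)$ is a unique edge exchange for $(S,T)$.
   Context: Graphs are finite, undirected, possibly with parallel edges, no loops. A spanning tree is $T\subseteq E$ with $(V,T)$ connected and acyclic; bispanning means $E$ is the union of two disjoint spanning trees; atomic means the only bispanning subgraphs are the graph itself and single vertices. For a spanning tree $T$ and $e\notin T$, $C_G(T,e)$ is the edge set of the unique cycle in $T\cup\{e\}$; for $e\in T$, $D_G(T,e)$ is the set of edges of $G$ with one end in each component of $(V,T\setminus\{e\})$. $(e,f,S,T)$ is an arc of $\vec\tau_3(G)$ iff either $e\in S,f\in T$ and $D_G(S,e)\cap C_G(T,e)=\{e,f\}$, or $e\in T,f\in S$ and $D_G(T,e)\cap C_G(S,e)=\{e,f\}$. Among $e_x,e_y,e_z$ exactly one lies in a different tree from the other two; it is the attachment edge $e_c$; of the other two, the one contained in the fundamental cycle $C_G(\cdot,e_c)$ of $e_c$ with respect to the tree not containing $e_c$ is the cycle edge $e_a$, the other the non-cycle edge $e_b$. *)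

theory Defs
  imports Main
begin

text \<open>Finite multigraphs without loops: vertex set V, edge set E, and an
endpoint map ends assigning each edge its 2-element set of endpoints.\<close>

definition graph :: "'v set \<Rightarrow> 'e set \<Rightarrow> ('e \<Rightarrow> 'v set) \<Rightarrow> bool" where
  "graph V E ends \<longleftrightarrow> finite V \<and> finite E \<and>
     (\<forall>e\<in>E. ends e \<subseteq> V \<and> card (ends e) = 2)"

definition reach :: "('e \<Rightarrow> 'v set) \<Rightarrow> 'e set \<Rightarrow> 'v \<Rightarrow> 'v \<Rightarrow> bool" where
  "reach ends F = (\<lambda>a b. \<exists>f\<in>F. ends f = {a, b})\<^sup>*\<^sup>*"

definition connected_on :: "'v set \<Rightarrow> ('e \<Rightarrow> 'v set) \<Rightarrow> 'e set \<Rightarrow> bool" where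
  "connected_on V ends F \<longleftrightarrow> (\<forall>a\<in>V. \<forall>b\<in>V. reach ends F a b)"

definition is_cycle :: "('e \<Rightarrow> 'v set) \<Rightarrow> 'e set \<Rightarrow> bool" where
  "is_cycle ends C \<longleftrightarrow> C \<noteq> {} \<and> finite C \<and>
     (\<forall>u\<in>\<Union>(ends ` C). card {f\<in>C. u \<in> ends f} = 2) \<and>
     connected_on (\<Union>(ends ` C)) ends C"

definition acyclic_edges :: "('e \<Rightarrow> 'v set) \<Rightarrow> 'e set \<Rightarrow> bool" where
  "acyclic_edges ends F \<longleftrightarrow> \<not> (\<exists>C\<subseteq>F. is_cycle ends C)"

definition spanning_tree :: "'v set \<Rightarrow> 'e set \<Rightarrow> ('e \<Rightarrow> 'v set) \<Rightarrow> 'e set \<Rightarrow> bool" where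
  "spanning_tree V E ends T \<longleftrightarrow> T \<subseteq> E \<and> connected_on V ends T \<and> acyclic_edges ends T"

definition bispanning :: "'v set \<Rightarrow> 'e set \<Rightarrow> ('e \<Rightarrow> 'v set) \<Rightarrow> bool" where
  "bispanning V E ends \<longleftrightarrow> (\<exists>S T. spanning_tree V E ends S \<and> spanning_tree V E ends T \<and>
      S \<inter> T = {} \<and> S \<union> T = E)"

definition atomic :: "'v set \<Rightarrow> 'e set \<Rightarrow> ('e \<Rightarrow> 'v set) \<Rightarrow> bool" where
  "atomic V E ends \<longleftrightarrow> (\<forall>V' E'. V' \<noteq> {} \<and> V' \<subseteq> V \<and> E' \<subseteq> E \<and> (\<forall>e\<in>E'. ends e \<subseteq> V') \<and>
      bispanning V' E' ends \<longrightarrow> (V' = V \<and> E' = E) \<or> (\<exists>u. V' = {u} \<and> E' = {}))"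

definition fund_cycle :: "('e \<Rightarrow> 'v set) \<Rightarrow> 'e set \<Rightarrow> 'e \<Rightarrow> 'e set" where
  "fund_cycle ends T e = (THE C. C \<subseteq> insert e T \<and> is_cycle ends C)"

definition component :: "'v set \<Rightarrow> ('e \<Rightarrow> 'v set) \<Rightarrow> 'e set \<Rightarrow> 'v \<Rightarrow> 'v set" where
  "component V ends F a = {b\<in>V. reach ends F a b}"

definition fund_cut :: "'v set \<Rightarrow> 'e set \<Rightarrow> ('e \<Rightarrow> 'v set) \<Rightarrow> 'e set \<Rightarrow> 'e \<Rightarrow> 'e set" where
  "fund_cut V E ends T e = {f\<in>E. \<exists>a b. ends f = {a, b} \<and>
      component V ends (T - {e}) a \<noteq> component V ends (T - {e}) b}"

definition tau3_arc :: "'v set \<Rightarrow> 'e set \<Rightarrow> ('e \<Rightarrow> 'v set) \<Rightarrow> 'e \<Rightarrow> 'e \<Rightarrow> 'e set \<Rightarrow> 'e set \<Rightarrow> bool" where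
  "tau3_arc V E ends e f S T \<longleftrightarrow>
     (e \<in> S \<and> f \<in> T \<and> fund_cut V E ends S e \<inter> fund_cycle ends T e = {e, f}) \<or>
     (e \<in> T \<and> f \<in> S \<and> fund_cut V E ends T e \<inter> fund_cycle ends S e = {e, f})"

end

theory Submission
  imports Defs
begin

text \<open>Of the three edges at \<open>v\<close> only \<open>ec\<close> lies in its tree \<open>A\<close>, so deleting \<open>ec\<close>
from \<open>A\<close> isolates \<open>v\<close>: the fundamental cut \<open>D(A, ec)\<close> consists exactly of the edges
at \<open>v\<close>. The fundamental cycle \<open>C(B, ec)\<close> meets \<open>v\<close> in \<open>ec\<close> and exactly one further
edge, which is \<open>ea\<close> by hypothesis, so \<open>D(A, ec) \<inter> C(B, ec) = {ec, ea}\<close>.\<close>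

lemma reach_refl: "reach ends F a a"
  by (simp add: reach_def)

lemma reach_edge: "g \<in> F \<Longrightarrow> ends g = {a, b} \<Longrightarrow> reach ends F a b"
  unfolding reach_def by (rule r_into_rtranclp) blast

lemma reach_trans: "reach ends F a b \<Longrightarrow> reach ends F b c \<Longrightarrow> reach ends F a c"
  unfolding reach_def by (rule rtranclp_trans)

lemma reach_sym: "reach ends F a b \<Longrightarrow> reach ends F b a"
  unfolding reach_def
proof (induction rule: rtranclp_induct)
  case (step b c)
  then have "(\<lambda>a b. \<exists>f\<in>F. ends f = {a, b}) c b" by (auto simp: insert_commute)
  then show ?case using step.IH by (rule converse_rtranclp_into_rtranclp)
qed simp

lemma reach_mono: "reach ends F a b \<Longrightarrow> F \<subseteq> G \<Longrightarrow> reach ends G a b"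
  unfolding reach_def by (erule rtranclp_mono[THEN predicate2D, rotated]) blast

lemma reach_replace_edge:
  assumes "ends e = {s, t}" "reach ends F a b" "reach ends G s t"
  shows "reach ends ((F - {e}) \<union> G) a b"
  using assms(2) unfolding reach_def[of ends F]
proof (induction rule: rtranclp_induct)
  case base then show ?case by (rule reach_refl)
next
  case (step b c)
  then obtain g where g: "g \<in> F" "ends g = {b, c}" by auto
  have "reach ends ((F - {e}) \<union> G) b c"
  proof (cases "g = e")
    case True
    then have "{b, c} = {s, t}" using g assms(1) by simp
    then have "reach ends G b c" using assms(3) reach_sym[OF assms(3)] reach_refl
      by (auto simp: doubleton_eq_iff)
    then show ?thesis by (rule reach_mono) blast
  next
    case False
    then show ?thesis using g by (intro reach_edge[of g]) auto
  qed
  with step.IH show ?case by (rule reach_trans)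
qed

lemma reach_from_untouched_vertex:
  assumes "\<forall>g\<in>F. v \<notin> ends g" "reach ends F v w"
  shows "w = v"
  using assms(2) unfolding reach_def
  by (induction rule: rtranclp_induct) (use assms(1) in auto)

text \<open>A walk through the only \<open>F\<close>-edge \<open>e = {v, w}\<close> at \<open>v\<close> enters and leaves \<open>v\<close> via \<open>w\<close>,
so it can be shortened to avoid \<open>e\<close>.\<close>

lemma reach_avoiding_pendant_edge:
  assumes only: "\<forall>g\<in>F. v \<in> ends g \<longrightarrow> g = e" and ew: "ends e = {v, w}"
    and two: "\<forall>g\<in>F. card (ends g) = 2" and r: "reach ends F a b" and av: "a \<noteq> v"
  shows "reach ends (F - {e}) a (if b = v then w else b)"
  using r unfolding reach_def[of ends F]
proof (induction rule: rtranclp_induct)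
  case base then show ?case using av by (simp add: reach_refl)
next
  case (step b c)
  then obtain g where g: "g \<in> F" "ends g = {b, c}" by auto
  have bc: "b \<noteq> c" using two g by auto
  show ?case
  proof (cases "b = v \<or> c = v")
    case True
    then have "g = e" using only g by auto
    then have "{b, c} = {v, w}" "w \<noteq> v" using g ew two bc by auto
    then have "b = v \<and> c = w \<or> b = w \<and> c = v" by (auto simp: doubleton_eq_iff)
    then show ?thesis using step.IH \<open>w \<noteq> v\<close> by (elim disjE conjE) simp_all
  next
    case False
    then have "reach ends (F - {e}) b c" using g ew by (intro reach_edge[of g]) auto
    moreover have "reach ends (F - {e}) a b" using step.IH False by simp
    ultimately have "reach ends (F - {e}) a c" by (rule reach_trans[rotated])
    then show ?thesis using False by simp
  qed
qed

abbreviation adjacent_in :: "('e \<Rightarrow> 'v set) \<Rightarrow> 'e set \<Rightarrow> 'v \<Rightarrow> 'v \<Rightarrow> bool" where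
  "adjacent_in ends F \<equiv> \<lambda>p q. \<exists>g\<in>F. ends g = {p, q}"

lemma reach_imp_walk:
  assumes "reach ends F a b"
  shows "\<exists>ps. ps \<noteq> [] \<and> hd ps = a \<and> last ps = b \<and> successively (adjacent_in ends F) ps"
  using assms unfolding reach_def
proof (induction rule: rtranclp_induct)
  case base then show ?case by (intro exI[of _ "[a]"]) auto
next
  case (step b c)
  then obtain ps where "ps \<noteq> []" "hd ps = a" "last ps = b"
    "successively (adjacent_in ends F) ps" by auto
  with step.hyps(2) show ?case
    by (intro exI[of _ "ps @ [c]"]) (auto simp: successively_append_iff)
qed

lemma successively_remove_loop:
  assumes "successively P (xs @ [y] @ ys @ [y] @ zs)"
  shows "successively P (xs @ [y] @ zs)"
proof -
  have "successively P ((xs @ [y]) @ (ys @ ([y] @ zs)))" using assms by simp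
  then have "successively P (xs @ [y])" "successively P ([y] @ zs)"
    by (simp_all only: successively_append_iff)
  then have "successively P ((xs @ [y]) @ zs)"
    by (cases zs) (auto simp: successively_append_iff)
  then show ?thesis by simp
qed

lemma successively_distinct_walk:
  "successively P ps \<Longrightarrow> ps \<noteq> [] \<Longrightarrow>
    \<exists>qs. qs \<noteq> [] \<and> hd qs = hd ps \<and> last qs = last ps \<and> successively P qs \<and> distinct qs"
proof (induction "length ps" arbitrary: ps rule: less_induct)
  case less
  show ?case
  proof (cases "distinct ps")
    case False
    then obtain xs ys zs y where ps: "ps = xs @ [y] @ ys @ [y] @ zs"
      using not_distinct_decomp by blast
    define qs where "qs = xs @ [y] @ zs"
    have "successively P qs"
      using less.prems(1) unfolding ps qs_def by (rule successively_remove_loop)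
    moreover have "length qs < length ps" "qs \<noteq> []" "hd qs = hd ps" "last qs = last ps"
      unfolding ps qs_def by (cases xs; cases zs; simp)+
    ultimately show ?thesis using less.hyps[of qs] by metis
  qed (use less.prems in blast)
qed

lemma card_filter_insert:
  assumes "finite P" "g \<notin> P"
  shows "card {h \<in> insert g P. Q h} = card {h \<in> P. Q h} + (if Q g then 1 else 0)"
  using assms by (auto simp: insert_compr[symmetric] Collect_conj_eq)

lemma card_2_other_element:
  assumes "card A = 2" "v \<in> A"
  obtains u where "A = {v, u}" "u \<noteq> v"
  using assms by (metis card_2_iff insert_commute insertE singletonD)

fun walk_edges :: "('e \<Rightarrow> 'v set) \<Rightarrow> 'e set \<Rightarrow> 'v list \<Rightarrow> 'e set" where
  "walk_edges ends F (p # q # rest) =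
     insert (SOME g. g \<in> F \<and> ends g = {p, q}) (walk_edges ends F (q # rest))"
| "walk_edges ends F _ = {}"

lemma walk_edges_Cons2:
  assumes "successively (adjacent_in ends F) (p # q # rest)"
  obtains g where "g \<in> F" "ends g = {p, q}"
    "walk_edges ends F (p # q # rest) = insert g (walk_edges ends F (q # rest))"
proof -
  have "\<exists>g. g \<in> F \<and> ends g = {p, q}" using assms by auto
  then show ?thesis using that by (metis (mono_tags, lifting) someI_ex walk_edges.simps(1))
qed

lemma walk_edges_subset:
  "successively (adjacent_in ends F) ps \<Longrightarrow> walk_edges ends F ps \<subseteq> F"
proof (induction ends F ps rule: walk_edges.induct)
  case (1 ends F p q rest)
  obtain g where "g \<in> F"
    "walk_edges ends F (p # q # rest) = insert g (walk_edges ends F (q # rest))"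
    by (rule walk_edges_Cons2[OF "1.prems"])
  with "1.IH" "1.prems" show ?case by (simp add: successively_Cons)
qed auto

lemma finite_walk_edges: "finite (walk_edges ends F ps)"
  by (induction ends F ps rule: walk_edges.induct) auto

lemma walk_edges_ends:
  "successively (adjacent_in ends F) ps \<Longrightarrow> length ps \<ge> 2 \<Longrightarrow>
    \<Union>(ends ` walk_edges ends F ps) = set ps"
proof (induction ends F ps rule: walk_edges.induct)
  case (1 ends F p q rest)
  obtain g where g: "ends g = {p, q}"
    "walk_edges ends F (p # q # rest) = insert g (walk_edges ends F (q # rest))"
    by (rule walk_edges_Cons2[OF "1.prems"(1)])
  show ?case
  proof (cases rest)
    case Cons
    with "1.IH" "1.prems" g show ?thesis by (auto simp: successively_Cons)
  qed (use g in \<open>simp del: walk_edges.simps(1)\<close>)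
qed auto

lemma walk_edges_reach:
  "successively (adjacent_in ends F) ps \<Longrightarrow> u \<in> set ps \<Longrightarrow>
    reach ends (walk_edges ends F ps) (hd ps) u"
proof (induction ends F ps arbitrary: u rule: walk_edges.induct)
  case (1 ends F p q rest)
  obtain g where g: "ends g = {p, q}"
    "walk_edges ends F (p # q # rest) = insert g (walk_edges ends F (q # rest))"
    by (rule walk_edges_Cons2[OF "1.prems"(1)])
  have "reach ends (insert g (walk_edges ends F (q # rest))) q u" if "u \<in> set (q # rest)"
    using "1.IH"[OF _ that] "1.prems"(1) by (auto simp: successively_Cons intro: reach_mono)
  moreover have "reach ends (insert g (walk_edges ends F (q # rest))) p q"
    using g by (intro reach_edge[of g]) auto
  ultimately show ?case
    using "1.prems"(2) g(2) by (auto intro: reach_trans reach_refl)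
qed (auto simp: reach_refl)

lemma walk_edges_degree:
  "successively (adjacent_in ends F) ps \<Longrightarrow> distinct ps \<Longrightarrow> length ps \<ge> 2 \<Longrightarrow>
   card {g \<in> walk_edges ends F ps. u \<in> ends g} =
     (if u \<in> set ps then (if u = hd ps \<or> u = last ps then 1 else 2) else 0)"
proof (induction ends F ps rule: walk_edges.induct)
  case (1 ends F p q rest)
  obtain g where g: "g \<in> F" "ends g = {p, q}"
    "walk_edges ends F (p # q # rest) = insert g (walk_edges ends F (q # rest))"
    by (rule walk_edges_Cons2[OF "1.prems"(1)])
  have tail: "successively (adjacent_in ends F) (q # rest)"
    using "1.prems"(1) by (simp add: successively_Cons)
  have "g \<notin> walk_edges ends F (q # rest)"
    using walk_edges_ends[OF tail] g "1.prems"(2) by (cases rest) auto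
  then have c: "card {h \<in> walk_edges ends F (p # q # rest). u \<in> ends h} =
      card {h \<in> walk_edges ends F (q # rest). u \<in> ends h} + (if u \<in> ends g then 1 else 0)"
    unfolding g(3) by (rule card_filter_insert[OF finite_walk_edges])
  show ?case
  proof (cases rest)
    case Nil
    then show ?thesis using c g by simp
  next
    case (Cons a list)
    then have "card {g \<in> walk_edges ends F (q # rest). u \<in> ends g} =
        (if u \<in> set (q # rest) then (if u = q \<or> u = last (q # rest) then 1 else 2) else 0)"
      using "1.IH" "1.prems" tail by simp
    moreover have "last (q # rest) \<noteq> q" "p \<notin> set (q # rest)" "p \<noteq> q"
      "last (p # q # rest) = last (q # rest)"
      using "1.prems" Cons by auto
    ultimately show ?thesis unfolding c using g(2)
      by (cases "u = p"; cases "u = q") simp_all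
  qed
qed auto

lemma reach_without_edge_imp_cycle:
  assumes "f \<in> F" "ends f = {a, b}" "a \<noteq> b" "reach ends (F - {f}) a b"
  shows "\<exists>C\<subseteq>F. is_cycle ends C \<and> f \<in> C"
proof -
  obtain ps0 where "ps0 \<noteq> []" "hd ps0 = a" "last ps0 = b"
    "successively (adjacent_in ends (F - {f})) ps0"
    using reach_imp_walk[OF assms(4)] by blast
  then obtain ps where ps: "ps \<noteq> []" "hd ps = a" "last ps = b"
    "successively (adjacent_in ends (F - {f})) ps" "distinct ps"
    using successively_distinct_walk[of "adjacent_in ends (F - {f})" ps0] by auto
  have len: "length ps \<ge> 2"
    using ps(1-3) assms(3) by (cases ps rule: remdups_adj.cases) auto
  define P where "P = walk_edges ends (F - {f}) ps"
  define C where "C = insert f P"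
  have P: "P \<subseteq> F - {f}" "finite P" "\<Union>(ends ` P) = set ps"
    using walk_edges_subset[OF ps(4)] finite_walk_edges walk_edges_ends[OF ps(4) len]
    unfolding P_def by auto
  have ab: "a \<in> set ps" "b \<in> set ps" using ps(1-3) by auto
  have U: "\<Union>(ends ` C) = set ps" using P ab assms(2) by (auto simp: C_def)
  have "card {g\<in>C. u \<in> ends g} = 2" if "u \<in> set ps" for u
  proof -
    have "card {g\<in>C. u \<in> ends g} = card {g\<in>P. u \<in> ends g} + (if u \<in> ends f then 1 else 0)"
      unfolding C_def using P(1,2) by (intro card_filter_insert) auto
    then show ?thesis
      using walk_edges_degree[OF ps(4) ps(5) len, of u] that ps(2,3) assms(2)
      unfolding P_def by auto
  qed
  moreover have "connected_on (\<Union>(ends ` C)) ends C"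
    unfolding connected_on_def U
  proof (intro ballI)
    fix u w assume "u \<in> set ps" "w \<in> set ps"
    then have "reach ends P a u" "reach ends P a w"
      using walk_edges_reach[OF ps(4)] ps(2) unfolding P_def by auto
    then have "reach ends P u w" by (blast intro: reach_sym reach_trans)
    then show "reach ends C u w" by (rule reach_mono) (auto simp: C_def)
  qed
  ultimately have "is_cycle ends C" unfolding is_cycle_def using U P(2) by (auto simp: C_def)
  moreover have "C \<subseteq> F" using P assms(1) by (auto simp: C_def)
  ultimately show ?thesis unfolding C_def by blast
qed

lemma sum_card_filter_swap:
  assumes "finite K" "finite D"
  shows "(\<Sum>u\<in>K. card {g\<in>D. R u g}) = (\<Sum>g\<in>D. card {u\<in>K. R u g})"
proof -
  have "card {g\<in>D. R u g} = (\<Sum>g\<in>D. if R u g then 1 else 0)" for u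
    using assms(2) by (simp add: sum.If_cases Int_def)
  moreover have "card {u\<in>K. R u g} = (\<Sum>u\<in>K. if R u g then 1 else 0)" for g
    using assms(1) by (simp add: sum.If_cases Int_def)
  ultimately show ?thesis by (simp add: sum.swap[of _ K D])
qed

lemma sum_degree_eq_twice_card:
  assumes "finite K" "finite D" "\<forall>g\<in>D. ends g \<subseteq> K \<and> card (ends g) = 2"
  shows "(\<Sum>u\<in>K. card {g\<in>D. u \<in> ends g}) = 2 * card D"
proof -
  have "(\<Sum>u\<in>K. card {g\<in>D. u \<in> ends g}) = (\<Sum>g\<in>D. card {u\<in>K. u \<in> ends g})"
    by (rule sum_card_filter_swap[OF assms(1,2)])
  also have "\<dots> = (\<Sum>g\<in>D. 2)"
  proof (rule sum.cong[OF refl])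
    fix g assume "g \<in> D"
    then have "{u\<in>K. u \<in> ends g} = ends g" "card (ends g) = 2" using assms(3) by auto
    then show "card {u\<in>K. u \<in> ends g} = 2" by simp
  qed
  finally show ?thesis by simp
qed

text \<open>Otherwise the component of \<open>a\<close> in \<open>C - {f}\<close> would have an odd degree sum,
since \<open>a\<close> has degree 1 there and all its other vertices have degree 2.\<close>

lemma cycle_reach_without_edge:
  assumes cyc: "is_cycle ends C" and two: "\<forall>g\<in>C. card (ends g) = 2"
    and f: "f \<in> C" "ends f = {a, b}"
  shows "reach ends (C - {f}) a b"
proof (rule ccontr)
  assume nr: "\<not> reach ends (C - {f}) a b"
  define D where "D = C - {f}"
  define U where "U = \<Union>(ends ` C)"
  define K where "K = {u\<in>U. reach ends D a u}"
  define DK where "DK = {g\<in>D. ends g \<subseteq> K}"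
  have finC: "finite C" using cyc by (simp add: is_cycle_def)
  have "finite U" unfolding U_def using finC two by (auto intro: card_ge_0_finite)
  then have finK: "finite K" by (simp add: K_def)
  have finDK: "finite DK" using finC by (simp add: DK_def D_def)
  have aK: "a \<in> K" using f by (auto simp: K_def U_def reach_refl)
  have bK: "b \<notin> K" using nr by (simp add: K_def D_def)
  have closed: "ends g \<subseteq> K" if "u \<in> K" "g \<in> D" "u \<in> ends g" for u g
  proof
    fix w assume w: "w \<in> ends g"
    obtain p q where "ends g = {p, q}" using two \<open>g \<in> D\<close> by (auto simp: D_def card_2_iff)
    then have "ends g = {u, w} \<or> u = w" using w \<open>u \<in> ends g\<close> by auto
    then have "reach ends D u w" using reach_edge[OF \<open>g \<in> D\<close>] reach_refl by metis
    then show "w \<in> K"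
      using that w reach_trans[of ends D a u w] by (auto simp: K_def U_def D_def)
  qed
  have degD: "card {g\<in>DK. u \<in> ends g} = (if u = a then 1 else 2)" if "u \<in> K" for u
  proof -
    have "card {g\<in>C. u \<in> ends g} = 2"
      using cyc that unfolding is_cycle_def K_def U_def by blast
    moreover have "C = insert f D" "f \<notin> D" using f by (auto simp: D_def)
    moreover have "u \<in> ends f \<longleftrightarrow> u = a" using f bK that by auto
    moreover have "{g\<in>D. u \<in> ends g} = {g\<in>DK. u \<in> ends g}"
      using closed[OF that] by (auto simp: DK_def)
    moreover have "finite D" using finC by (simp add: D_def)
    ultimately show ?thesis
      using card_filter_insert[of D f "\<lambda>g. u \<in> ends g"] by (cases "u = a") simp_all
  qed
  have even: "(\<Sum>u\<in>K. card {g\<in>DK. u \<in> ends g}) = 2 * card DK"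
    using two by (intro sum_degree_eq_twice_card[OF finK finDK]) (auto simp: DK_def D_def)
  have "(\<Sum>u\<in>K. card {g\<in>DK. u \<in> ends g}) = (\<Sum>u\<in>K. if u = a then 1 else (2::nat))"
    using degD by (intro sum.cong) auto
  also have "\<dots> = 1 + 2 * card (K - {a})"
    using sum.remove[OF finK aK, of "\<lambda>u. if u = a then 1 else (2::nat)"] by simp
  finally show False using even by presburger
qed

text \<open>An edge \<open>f \<in> C1 - C2\<close> would close a cycle inside \<open>T\<close>: join its ends by the rest
of \<open>C1\<close>, rerouting around \<open>e\<close> along the rest of \<open>C2\<close>.\<close>

lemma cycles_in_tree_plus_edge_subset:
  assumes acyc: "acyclic_edges ends T" and two: "\<forall>g\<in>insert e T. card (ends g) = 2"
    and es: "ends e = {s, t}"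
    and C1: "C1 \<subseteq> insert e T" "is_cycle ends C1" and C2: "C2 \<subseteq> insert e T" "is_cycle ends C2"
  shows "C1 \<subseteq> C2"
proof
  fix f assume f1: "f \<in> C1"
  show "f \<in> C2"
  proof (rule ccontr)
    assume f2: "f \<notin> C2"
    have e2: "e \<in> C2" using C2 acyc unfolding acyclic_edges_def by blast
    then have fT: "f \<in> T" using f1 f2 C1 by auto
    obtain p q where pq: "ends f = {p, q}" "p \<noteq> q" using two fT by (auto simp: card_2_iff)
    have "reach ends (C1 - {f}) p q"
      using cycle_reach_without_edge[OF C1(2) _ f1 pq(1)] two C1(1) by blast
    moreover have "reach ends (C2 - {e}) s t"
      using cycle_reach_without_edge[OF C2(2) _ e2 es] two C2(1) by blast
    ultimately have "reach ends ((C1 - {f}) - {e} \<union> (C2 - {e})) p q"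
      by (rule reach_replace_edge[of ends e s t, OF es])
    then have "reach ends ((C1 \<union> C2) - {e} - {f}) p q"
      by (rule reach_mono) (use f2 in auto)
    moreover have "f \<in> (C1 \<union> C2) - {e}" using f1 e2 f2 by auto
    ultimately obtain C where "C \<subseteq> (C1 \<union> C2) - {e}" "is_cycle ends C"
      using reach_without_edge_imp_cycle[of f "(C1 \<union> C2) - {e}" ends p q] pq by blast
    moreover have "(C1 \<union> C2) - {e} \<subseteq> T" using C1 C2 by auto
    ultimately show False using acyc unfolding acyclic_edges_def by blast
  qed
qed

lemma fund_cycle_spec:
  assumes acyc: "acyclic_edges ends T" and two: "\<forall>g\<in>insert e T. card (ends g) = 2"
    and eT: "e \<notin> T" and es: "ends e = {s, t}" and r: "reach ends T s t"
  shows "fund_cycle ends T e \<subseteq> insert e T" "is_cycle ends (fund_cycle ends T e)"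
    "e \<in> fund_cycle ends T e"
proof -
  have "s \<noteq> t" using two es by auto
  moreover have "insert e T - {e} = T" using eT by auto
  ultimately obtain C0 where C0: "C0 \<subseteq> insert e T" "is_cycle ends C0"
    using reach_without_edge_imp_cycle[of e "insert e T" ends s t] es r by auto
  have "C = C0" if "C \<subseteq> insert e T" "is_cycle ends C" for C
    using cycles_in_tree_plus_edge_subset[OF acyc two es] that C0 by blast
  with C0 have "\<exists>!C. C \<subseteq> insert e T \<and> is_cycle ends C" by blast
  then have C: "fund_cycle ends T e \<subseteq> insert e T \<and> is_cycle ends (fund_cycle ends T e)"
    unfolding fund_cycle_def by (rule theI')
  then show "fund_cycle ends T e \<subseteq> insert e T" "is_cycle ends (fund_cycle ends T e)"
    by auto
  show "e \<in> fund_cycle ends T e"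
    using C acyc unfolding acyclic_edges_def by blast
qed

lemma fund_cut_pendant_edge:
  assumes G: "graph V E ends" and vV: "v \<in> V" and A: "A \<subseteq> E" "connected_on V ends A"
    and only: "\<forall>g\<in>A. v \<in> ends g \<longrightarrow> g = e" and ev: "e \<in> A" "v \<in> ends e"
  shows "fund_cut V E ends A e = {h\<in>E. v \<in> ends h}"
proof -
  have two: "\<forall>g\<in>E. card (ends g) = 2" and sub: "\<forall>g\<in>E. ends g \<subseteq> V"
    using G by (auto simp: graph_def)
  have other_end: "\<exists>u. ends h = {v, u} \<and> u \<noteq> v" if "h \<in> E" "v \<in> ends h" for h
    using card_2_other_element[of "ends h" v] two that by blast
  obtain w where w: "ends e = {v, w}" using other_end ev A(1) by blast
  show ?thesis
  proof (intro equalityI subsetI)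
    fix h assume "h \<in> fund_cut V E ends A e"
    then obtain a b where h: "h \<in> E" "ends h = {a, b}"
      and ab: "component V ends (A - {e}) a \<noteq> component V ends (A - {e}) b"
      unfolding fund_cut_def by blast
    have abV: "a \<in> V" "b \<in> V" using sub h by auto
    have "v \<in> ends h"
    proof (rule ccontr)
      assume "v \<notin> ends h"
      then have "a \<noteq> v" "b \<noteq> v" using h by auto
      then have "reach ends (A - {e}) a b"
        using reach_avoiding_pendant_edge[OF only w, of a b] two A abV
        by (auto simp: connected_on_def)
      then have "component V ends (A - {e}) a = component V ends (A - {e}) b"
        unfolding component_def by (blast intro: reach_sym reach_trans)
      with ab show False by contradiction
    qed
    with h show "h \<in> {h\<in>E. v \<in> ends h}" by blast
  next
    fix h assume "h \<in> {h\<in>E. v \<in> ends h}"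
    then have "h \<in> E" "v \<in> ends h" by auto
    then obtain u where u: "ends h = {v, u}" "u \<noteq> v" using other_end by blast
    have "\<forall>g\<in>A - {e}. v \<notin> ends g" using only by auto
    then have "u \<notin> component V ends (A - {e}) v"
      using reach_from_untouched_vertex[of "A - {e}" v ends u] u(2) by (auto simp: component_def)
    moreover have "u \<in> component V ends (A - {e}) u"
      using sub \<open>h \<in> E\<close> u by (auto simp: component_def reach_refl)
    ultimately show "h \<in> fund_cut V E ends A e"
      using \<open>h \<in> E\<close> u unfolding fund_cut_def by blast
  qed
qed

lemma cycle_edges_at_vertex:
  assumes "is_cycle ends C" "g1 \<in> C" "g2 \<in> C" "g1 \<noteq> g2" "v \<in> ends g1" "v \<in> ends g2"
  shows "{g\<in>C. v \<in> ends g} = {g1, g2}"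
proof -
  have "card {g\<in>C. v \<in> ends g} = 2" "finite C"
    using assms(1,2,5) unfolding is_cycle_def by blast+
  moreover have "{g1, g2} \<subseteq> {g\<in>C. v \<in> ends g}" "card {g1, g2} = 2" using assms by auto
  ultimately show ?thesis by (intro card_subset_eq[symmetric]) simp_all
qed

lemma exchange_at_degree_three_vertex:
  assumes G: "graph V E ends" and vV: "v \<in> V"
    and inc: "{f\<in>E. v \<in> ends f} = {ec, ea, eb}"
    and A: "spanning_tree V E ends A" and B: "spanning_tree V E ends B"
    and AB: "A \<inter> B = {}" "A \<union> B = E"
    and ecA: "ec \<in> A" and eaB: "ea \<in> B" and ebB: "eb \<in> B"
    and eaC: "ea \<in> fund_cycle ends B ec"
  shows "fund_cut V E ends A ec \<inter> fund_cycle ends B ec = {ec, ea}"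
proof -
  have two: "\<forall>g\<in>E. card (ends g) = 2" and sub: "\<forall>g\<in>E. ends g \<subseteq> V"
    using G by (auto simp: graph_def)
  have v: "v \<in> ends ec" "v \<in> ends ea" using inc by blast+
  have ecE: "ec \<in> E" and ecB: "ec \<notin> B" using ecA AB by blast+
  obtain w where w: "ends ec = {v, w}" "w \<noteq> v"
    by (rule card_2_other_element[of "ends ec" v]) (use two ecE v(1) in auto)
  have A': "A \<subseteq> E" "connected_on V ends A" and B': "B \<subseteq> E" "connected_on V ends B"
    "acyclic_edges ends B" using A B by (auto simp: spanning_tree_def)
  have only: "\<forall>g\<in>A. v \<in> ends g \<longrightarrow> g = ec"
  proof (intro ballI impI)
    fix g assume g: "g \<in> A" "v \<in> ends g"
    then have "g \<in> {f\<in>E. v \<in> ends f}" using A'(1) by auto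
    then have "g \<in> {ec, ea, eb}" by (simp only: inc)
    moreover have "g \<notin> B" using g(1) AB(1) by blast
    ultimately show "g = ec" using eaB ebB by auto
  qed
  have cut: "fund_cut V E ends A ec = {h\<in>E. v \<in> ends h}"
    by (rule fund_cut_pendant_edge[OF G vV A' only ecA v(1)])
  have "w \<in> V" using sub ecE w by auto
  then have "reach ends B v w" using B'(2) vV by (simp add: connected_on_def)
  moreover have "\<forall>g\<in>insert ec B. card (ends g) = 2" using two B'(1) ecE by auto
  ultimately have C: "fund_cycle ends B ec \<subseteq> insert ec B" "is_cycle ends (fund_cycle ends B ec)"
    "ec \<in> fund_cycle ends B ec"
    using fund_cycle_spec[OF B'(3) _ ecB w(1)] by auto
  have "ec \<noteq> ea" using ecA eaB AB by auto
  then have "{g\<in>fund_cycle ends B ec. v \<in> ends g} = {ec, ea}"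
    using cycle_edges_at_vertex[OF C(2,3) eaC] v by blast
  moreover have "fund_cycle ends B ec \<subseteq> E" using C(1) B'(1) ecE by auto
  ultimately show ?thesis unfolding cut by auto
qed

theorem mainTheorem16:
  fixes V :: "'v set" and E :: "'e set" and ends :: "'e \<Rightarrow> 'v set"
    and v x y z :: 'v and ex ey ez ec ea eb :: 'e and S T :: "'e set"
  assumes "graph V E ends"
    and "bispanning V E ends"
    and "atomic V E ends"
    and "v \<in> V"
    and "{f\<in>E. v \<in> ends f} = {ex, ey, ez}"
    and "ex \<noteq> ey" "ex \<noteq> ez" "ey \<noteq> ez"
    and "ends ex = {v, x}" "ends ey = {v, y}" "ends ez = {v, z}"
    and "spanning_tree V E ends S" "spanning_tree V E ends T"
    and "S \<inter> T = {}" "S \<union> T = E"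
    and "{ec, ea, eb} = {ex, ey, ez}"
    and "(ec \<in> S \<and> ea \<in> T \<and> eb \<in> T) \<or> (ec \<in> T \<and> ea \<in> S \<and> eb \<in> S)"
    and "ea \<in> fund_cycle ends (if ec \<in> S then T else S) ec"
  shows "tau3_arc V E ends ec ea S T"
proof -
  have inc: "{f\<in>E. v \<in> ends f} = {ec, ea, eb}" using assms(5,16) by simp
  from assms(17) show ?thesis
  proof
    assume h: "ec \<in> S \<and> ea \<in> T \<and> eb \<in> T"
    with assms(18) have "ea \<in> fund_cycle ends T ec" by simp
    with h have "fund_cut V E ends S ec \<inter> fund_cycle ends T ec = {ec, ea}"
      using exchange_at_degree_three_vertex[OF assms(1,4) inc assms(12-15)] by blast
    with h show ?thesis unfolding tau3_arc_def by blast
  next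
    assume h: "ec \<in> T \<and> ea \<in> S \<and> eb \<in> S"
    with assms(14) have "ec \<notin> S" by blast
    with assms(18) have "ea \<in> fund_cycle ends S ec" by simp
    moreover have "T \<inter> S = {}" "T \<union> S = E" using assms(14,15) by blast+
    ultimately have "fund_cut V E ends T ec \<inter> fund_cycle ends S ec = {ec, ea}"
      using exchange_at_degree_three_vertex[OF assms(1,4) inc assms(13,12)] h by blast
    with h show ?thesis unfolding tau3_arc_def by blast
  qed
qed

end
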